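(* Let $N\ge2$, $D>0$, $b_1,\dots,b_N>0$, $0<r_1<\cdots<r_N$, and let $$P_N(\lambda)=D\prod_{j=1}^N(\lambda+r_j)-\sum_{i=1}^N b_i\prod_{j\neq i}(\lambda+r_j),$$ with roots $a_1>a_2>\cdots>a_N$. Set $$b:=\min_i b_i,\quad B:=\max_i b_i,\quad r:=\min_{1\le i\le N-1}(r_{i+1}-r_i),$$ $$\mu:=\min\Big\{\frac{b\,r^{N-1}}{4D(2r_N)^{N-1}+4NB(2r_N)^{N-2}+1},\ \frac r4,\ \frac{r_1}4\Big\}.$$ Then $$|P_N(\lambda)|\ge\frac{b\,r^{N-1}}{2}>0\qquad\text{for all }\lambda\in\bigcup_{j=1}^N[-r_j-\mu,-r_j+\mu],$$ and consequently $|a_i-a_j|\ge2\mu$ for all $1\le i<j\le N$.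
   Context: Standing assumptions: $D>0$, $b_i>0$, $0<r_1<\cdots<r_N$. The roots of $P_N$ are real, simple and interlace as $-r_N<a_N<-r_{N-1}<\cdots<-r_1<a_1$. *)

theory Defs
  imports Complex_Main
begin

definition PN :: "nat \<Rightarrow> real \<Rightarrow> (nat \<Rightarrow> real) \<Rightarrow> (nat \<Rightarrow> real) \<Rightarrow> real \<Rightarrow> real" where
  "PN N D b r lam = D * (\<Prod>j\<in>{1..N}. lam + r j)
      - (\<Sum>i\<in>{1..N}. b i * (\<Prod>j\<in>{1..N} - {i}. lam + r j))"

end

theory Submission
  imports Defs
begin

(* Near a pole -r_j, the term b_j * prod_{k ~= j} (lam + r_k) of P_N dominates: the other poles are
   at distance at least r - mu, so by Bernoulli's inequality it is at least (3/4) b r^(N-1).  Every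
   other term of P_N contains the factor lam + r_j, of size at most mu, times a product of factors
   bounded by 2 r_N, and the choice of mu makes their total at most (1/4) b r^(N-1).  Hence P_N has
   no root within mu of a pole.  For two roots x < y, either some pole -r_k lies between them, and
   then y - x > 2 mu, or none does; then every b_i / (lam + r_i) is strictly decreasing on [x, y],
   so P_N / prod_k (lam + r_k) = D - sum_i b_i / (lam + r_i) cannot vanish at both x and y. *)

lemma le_of_consecutive_less:
  fixes r :: "nat \<Rightarrow> 'a::order"
  assumes inc: "\<forall>k\<in>{1..<N}. r k < r (k+1)" and "1 \<le> i" "i \<le> j" "j \<le> N"
  shows "r i \<le> r j"
proof (rule lift_Suc_mono_le_ivl[where N = "{1..<N}"])
  show "r k \<le> r (Suc k)" if "k \<in> {1..<N}" for k
    using inc that by (simp add: less_imp_le)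
qed (use assms in auto)

lemma gap_le_diff:
  fixes r :: "nat \<Rightarrow> 'a::linordered_ab_group_add"
  assumes inc: "\<forall>k\<in>{1..<N}. r k < r (k+1)" and gap: "\<forall>k\<in>{1..<N}. g \<le> r (k+1) - r k"
    and "1 \<le> i" "i < j" "j \<le> N"
  shows "g \<le> r j - r i"
proof -
  have "r (Suc i) \<le> r j" using le_of_consecutive_less[OF inc] assms by simp
  moreover have "g \<le> r (Suc i) - r i" using gap assms by auto
  ultimately show ?thesis by (simp add: algebra_simps)
qed

lemma three_quarters_le_power_diff:
  fixes g m :: "'a::linordered_field"
  assumes g: "0 < g" and m: "0 \<le> m" "4 * of_nat n * m \<le> g"
  shows "3 / 4 * g ^ n \<le> (g - m) ^ n"
proof (cases "n = 0")
  case True then show ?thesis by simp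
next
  case False
  have "m \<le> of_nat n * m" using False m(1) by (simp add: mult_le_cancel_right1)
  then have "3 / 4 \<le> 1 + of_nat n * (- m / g)"
    using g m by (simp add: field_simps)
  also have "\<dots> \<le> (1 + (- m / g)) ^ n"
    using g m \<open>m \<le> of_nat n * m\<close> by (intro Bernoulli_inequality) (simp add: field_simps)
  finally have "3 / 4 * g ^ n \<le> g ^ n * (1 - m / g) ^ n"
    using g by (simp add: mult.commute mult_left_mono)
  also have "\<dots> = (g - m) ^ n"
    using g by (simp add: power_mult_distrib[symmetric] field_simps)
  finally show ?thesis .
qed

lemma abs_prod_le_power:
  fixes f :: "'b \<Rightarrow> 'a::linordered_idom"
  assumes "\<forall>k\<in>T. \<bar>f k\<bar> \<le> M"
  shows "\<bar>prod f T\<bar> \<le> M ^ card T"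
  using assms by (induction T rule: infinite_finite_induct) (auto simp: abs_mult intro!: mult_mono)

lemma power_le_abs_prod:
  fixes f :: "'b \<Rightarrow> 'a::linordered_idom"
  assumes "\<forall>k\<in>T. M \<le> \<bar>f k\<bar>" "0 \<le> M"
  shows "M ^ card T \<le> \<bar>prod f T\<bar>"
  using assms by (induction T rule: infinite_finite_induct) (auto simp: abs_mult intro!: mult_mono)

lemma PN_split_at_pole:
  assumes "j \<in> {1..N}"
  shows "PN N D b r lam =
    (lam + r j) * (D * (\<Prod>k\<in>{1..N} - {j}. lam + r k)
                   - (\<Sum>i\<in>{1..N} - {j}. b i * (\<Prod>k\<in>{1..N} - {i} - {j}. lam + r k)))
    - b j * (\<Prod>k\<in>{1..N} - {j}. lam + r k)"
proof -
  define P where "P = (\<Prod>k\<in>{1..N} - {j}. lam + r k)"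
  define Q where "Q = (\<Sum>i\<in>{1..N} - {j}. b i * (\<Prod>k\<in>{1..N} - {i} - {j}. lam + r k))"
  have prod_S: "(\<Prod>k\<in>{1..N}. lam + r k) = (lam + r j) * P"
    unfolding P_def using assms by (intro prod.remove) auto
  have "(\<Prod>k\<in>{1..N} - {i}. lam + r k) = (lam + r j) * (\<Prod>k\<in>{1..N} - {i} - {j}. lam + r k)"
    if "i \<in> {1..N} - {j}" for i
    using that assms by (subst prod.remove[of _ j]) auto
  then have "(\<Sum>i\<in>{1..N} - {j}. b i * (\<Prod>k\<in>{1..N} - {i}. lam + r k)) = (lam + r j) * Q"
    unfolding Q_def sum_distrib_left by (intro sum.cong) auto
  then have sum_S: "(\<Sum>i\<in>{1..N}. b i * (\<Prod>k\<in>{1..N} - {i}. lam + r k)) = b j * P + (lam + r j) * Q"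
    unfolding P_def using assms by (subst sum.remove[of _ j]) auto
  show ?thesis
    unfolding PN_def prod_S sum_S P_def[symmetric] Q_def[symmetric] by (simp add: algebra_simps)
qed

lemma PN_cofactor_abs_le:
  fixes D bmax R :: real
  assumes j: "j \<in> {1..N}" and D: "0 \<le> D" and b: "\<forall>i\<in>{1..N}. 0 \<le> b i \<and> b i \<le> bmax"
    and bounded: "\<forall>k\<in>{1..N}. \<bar>lam + r k\<bar> \<le> R"
  shows "\<bar>D * (\<Prod>k\<in>{1..N} - {j}. lam + r k)
           - (\<Sum>i\<in>{1..N} - {j}. b i * (\<Prod>k\<in>{1..N} - {i} - {j}. lam + r k))\<bar>
    \<le> D * R ^ (N - 1) + real (N - 1) * bmax * R ^ (N - 2)"
proof -
  define P where "P = (\<Prod>k\<in>{1..N} - {j}. lam + r k)"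
  define Q where "Q i = (\<Prod>k\<in>{1..N} - {i} - {j}. lam + r k)" for i
  have card_P: "card ({1..N} - {j}) = N - 1" using j by simp
  have P_le: "\<bar>P\<bar> \<le> R ^ (N - 1)"
    unfolding P_def using abs_prod_le_power[of "{1..N} - {j}" "\<lambda>k. lam + r k" R] bounded card_P
    by auto
  have Q_le: "\<bar>b i * Q i\<bar> \<le> bmax * R ^ (N - 2)" if i: "i \<in> {1..N} - {j}" for i
  proof -
    have "card ({1..N} - {i} - {j}) = N - 2" using i j by auto
    then have "\<bar>Q i\<bar> \<le> R ^ (N - 2)"
      unfolding Q_def using abs_prod_le_power[of "{1..N} - {i} - {j}" "\<lambda>k. lam + r k" R] bounded
      by auto
    moreover have "\<bar>b i\<bar> \<le> bmax" using b i by auto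
    ultimately show ?thesis by (simp add: abs_mult mult_mono)
  qed
  have "\<bar>D * P - (\<Sum>i\<in>{1..N} - {j}. b i * Q i)\<bar>
      \<le> \<bar>D * P\<bar> + \<bar>\<Sum>i\<in>{1..N} - {j}. b i * Q i\<bar>"
    by (rule abs_triangle_ineq4)
  also have "\<dots> \<le> D * \<bar>P\<bar> + (\<Sum>i\<in>{1..N} - {j}. \<bar>b i * Q i\<bar>)"
    using D by (intro add_mono sum_abs) (simp add: abs_mult)
  also have "\<dots> \<le> D * R ^ (N - 1) + (\<Sum>i\<in>{1..N} - {j}. bmax * R ^ (N - 2))"
    using D P_le Q_le by (intro add_mono mult_left_mono sum_mono) auto
  also have "\<dots> = D * R ^ (N - 1) + real (N - 1) * bmax * R ^ (N - 2)"
    using card_P by simp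
  finally show ?thesis unfolding P_def Q_def .
qed

lemma PN_abs_ge_near_pole:
  fixes D bmin bmax c R \<mu> :: real
  assumes j: "j \<in> {1..N}" and D: "0 \<le> D"
    and b: "\<forall>i\<in>{1..N}. bmin \<le> b i \<and> b i \<le> bmax" "0 \<le> bmin"
    and near: "\<bar>lam + r j\<bar> \<le> \<mu>"
    and far: "\<forall>k\<in>{1..N} - {j}. c \<le> \<bar>lam + r k\<bar>" "0 \<le> c"
    and bounded: "\<forall>k\<in>{1..N}. \<bar>lam + r k\<bar> \<le> R"
  shows "bmin * c ^ (N - 1) - \<mu> * (D * R ^ (N - 1) + real (N - 1) * bmax * R ^ (N - 2))
    \<le> \<bar>PN N D b r lam\<bar>"
proof -
  define P where "P = (\<Prod>k\<in>{1..N} - {j}. lam + r k)"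
  define E where "E = D * P - (\<Sum>i\<in>{1..N} - {j}. b i * (\<Prod>k\<in>{1..N} - {i} - {j}. lam + r k))"
  have "bmin \<le> \<bar>b j\<bar>" using b(1) j by (meson abs_ge_self order_trans)
  moreover have "c ^ (N - 1) \<le> \<bar>P\<bar>"
    unfolding P_def using power_le_abs_prod[OF far] j by simp
  ultimately have "bmin * c ^ (N - 1) \<le> \<bar>b j * P\<bar>"
    unfolding abs_mult using b(2) far(2) by (intro mult_mono) auto
  moreover have "\<bar>E\<bar> \<le> D * R ^ (N - 1) + real (N - 1) * bmax * R ^ (N - 2)"
    unfolding E_def P_def using b by (intro PN_cofactor_abs_le[OF j D _ bounded]) force
  then have "\<bar>(lam + r j) * E\<bar> \<le> \<mu> * (D * R ^ (N - 1) + real (N - 1) * bmax * R ^ (N - 2))"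
    using near unfolding abs_mult by (intro mult_mono) auto
  moreover have "PN N D b r lam = (lam + r j) * E - b j * P"
    unfolding E_def P_def using PN_split_at_pole[OF j] .
  ultimately show ?thesis by linarith
qed

lemma dist_to_poles:
  fixes r :: "nat \<Rightarrow> real"
  assumes r1: "0 < r 1" and inc: "\<forall>k\<in>{1..<N}. r k < r (k+1)"
    and gap: "\<forall>k\<in>{1..<N}. g \<le> r (k+1) - r k"
    and j: "j \<in> {1..N}" and near: "\<bar>lam + r j\<bar> \<le> \<mu>" and small: "\<mu> \<le> r N"
  shows "\<forall>k\<in>{1..N}. \<bar>lam + r k\<bar> \<le> 2 * r N"
    and "\<forall>k\<in>{1..N} - {j}. g - \<mu> \<le> \<bar>lam + r k\<bar>"
proof -
  have r_range: "0 < r k \<and> r k \<le> r N" if "k \<in> {1..N}" for k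
    using that r1 le_of_consecutive_less[OF inc, of 1 k] le_of_consecutive_less[OF inc, of k N]
    by auto
  show "\<forall>k\<in>{1..N}. \<bar>lam + r k\<bar> \<le> 2 * r N"
    using r_range[OF j] r_range near small by fastforce
  show "\<forall>k\<in>{1..N} - {j}. g - \<mu> \<le> \<bar>lam + r k\<bar>"
  proof
    fix k assume k: "k \<in> {1..N} - {j}"
    have "g \<le> \<bar>r k - r j\<bar>"
    proof (cases "k < j")
      case True then show ?thesis using gap_le_diff[OF inc gap, of k j] k j by auto
    next
      case False then show ?thesis using gap_le_diff[OF inc gap, of j k] k j by auto
    qed
    then show "g - \<mu> \<le> \<bar>lam + r k\<bar>" using near by linarith
  qed
qed

lemma four_N_mu_le_gap:
  fixes D bmin bmax g R \<mu> :: real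
  assumes N: "2 \<le> N" and "0 \<le> D" and b: "0 < bmin" "bmin \<le> bmax"
    and g: "0 < g" "g \<le> R" and \<mu>: "0 \<le> \<mu>"
    and \<mu>_le: "\<mu> * (4 * D * R ^ (N - 1) + 4 * real N * bmax * R ^ (N - 2) + 1) \<le> bmin * g ^ (N - 1)"
  shows "4 * real N * \<mu> \<le> g"
proof -
  have g_pow: "g ^ (N - 1) = g * g ^ (N - 2)"
    using N by (simp add: power_Suc[symmetric] Suc_diff_Suc numeral_2_eq_2 del: power_Suc)
  have "0 \<le> \<mu> * (4 * D * R ^ (N - 1)) + \<mu>"
    using assms by simp
  with \<mu>_le have "\<mu> * (4 * real N * bmax * R ^ (N - 2)) \<le> bmin * g ^ (N - 1)"
    unfolding distrib_left mult_1_right by linarith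
  also have "\<dots> = g * (bmin * g ^ (N - 2))"
    using g_pow by simp
  also have "\<dots> \<le> g * (bmax * R ^ (N - 2))"
    using b g by (intro mult_left_mono mult_mono power_mono) auto
  finally have "(4 * real N * \<mu>) * (bmax * R ^ (N - 2)) \<le> g * (bmax * R ^ (N - 2))"
    by (simp add: ac_simps)
  moreover have "0 < bmax * R ^ (N - 2)"
    using b g by simp
  ultimately show ?thesis by (rule mult_right_le_imp_le)
qed

lemma PN_abs_ge_half_near_pole:
  fixes D bmin bmax g \<mu> :: real
  assumes N: "2 \<le> N" and D: "0 \<le> D"
    and b: "\<forall>i\<in>{1..N}. bmin \<le> b i \<and> b i \<le> bmax" "0 < bmin"
    and r1: "0 < r 1" and inc: "\<forall>k\<in>{1..<N}. r k < r (k+1)"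
    and gap: "\<forall>k\<in>{1..<N}. g \<le> r (k+1) - r k" and g: "0 < g"
    and \<mu>: "\<mu> * (4 * D * (2 * r N) ^ (N - 1) + 4 * real N * bmax * (2 * r N) ^ (N - 2) + 1)
        \<le> bmin * g ^ (N - 1)" "\<mu> \<le> r 1 / 4"
    and j: "j \<in> {1..N}" and near: "\<bar>lam + r j\<bar> \<le> \<mu>"
  shows "bmin * g ^ (N - 1) / 2 \<le> \<bar>PN N D b r lam\<bar>"
proof -
  define R where "R = 2 * r N"
  have \<mu>0: "0 \<le> \<mu>" using near by linarith
  have "r 1 \<le> r N" using le_of_consecutive_less[OF inc, of 1 N] N by simp
  then have R: "\<forall>k\<in>{1..N}. \<bar>lam + r k\<bar> \<le> R" "\<forall>k\<in>{1..N} - {j}. g - \<mu> \<le> \<bar>lam + r k\<bar>"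
    using dist_to_poles[OF r1 inc gap j near] \<mu>(2) r1 unfolding R_def by auto
  have "g \<le> r 2 - r 1" using gap[rule_format, of 1] N by (simp add: numeral_2_eq_2)
  moreover have "r 2 \<le> r N" using le_of_consecutive_less[OF inc, of 2 N] N by simp
  ultimately have "g \<le> R" using r1 \<open>r 1 \<le> r N\<close> unfolding R_def by linarith
  have bmax: "bmin \<le> bmax" using b N by force
  have "4 * real N * \<mu> \<le> g"
    using four_N_mu_le_gap[OF N D b(2) bmax g \<open>g \<le> R\<close> \<mu>0] \<mu>(1) unfolding R_def by simp
  moreover have "4 * real (N - 1) * \<mu> \<le> 4 * real N * \<mu>" using \<mu>0 by (intro mult_right_mono) auto
  ultimately have "3 / 4 * g ^ (N - 1) \<le> (g - \<mu>) ^ (N - 1)"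
    by (intro three_quarters_le_power_diff[OF g \<mu>0]) linarith
  then have "3 / 4 * (bmin * g ^ (N - 1)) \<le> bmin * (g - \<mu>) ^ (N - 1)"
    using b(2) by (simp add: mult.left_commute)
  moreover have "\<mu> \<le> 4 * real N * \<mu>" using N \<mu>0 by (simp add: mult_le_cancel_right1)
  then have "bmin * (g - \<mu>) ^ (N - 1)
      - \<mu> * (D * R ^ (N - 1) + real (N - 1) * bmax * R ^ (N - 2)) \<le> \<bar>PN N D b r lam\<bar>"
    using \<open>4 * real N * \<mu> \<le> g\<close> b(2)
    by (intro PN_abs_ge_near_pole[OF j D b(1) _ near R(2) _ R(1)]) auto
  moreover have "\<mu> * (real (N - 1) * bmax * R ^ (N - 2)) \<le> \<mu> * (real N * bmax * R ^ (N - 2))"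
    using \<mu>0 b(2) bmax \<open>g \<le> R\<close> g by (intro mult_left_mono mult_right_mono) auto
  ultimately show ?thesis using \<mu>(1)[folded R_def] \<mu>0 by (simp add: algebra_simps)
qed

lemma PN_eq_prod_mult:
  assumes "\<forall>k\<in>{1..N}. lam + r k \<noteq> 0"
  shows "PN N D b r lam = (\<Prod>k\<in>{1..N}. lam + r k) * (D - (\<Sum>i\<in>{1..N}. b i / (lam + r i)))"
proof -
  have "(\<Prod>k\<in>{1..N}. lam + r k) * (b i / (lam + r i)) = b i * (\<Prod>k\<in>{1..N} - {i}. lam + r k)"
    if i: "i \<in> {1..N}" for i
    using i assms by (subst prod.remove[of _ i]) auto
  then show ?thesis
    unfolding PN_def by (simp add: right_diff_distrib sum_distrib_left)
qed

lemma PN_roots_dist_ge: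
  fixes x y \<mu> :: real
  assumes b: "\<forall>i\<in>{1..N}. b i > 0" and N: "1 \<le> N"
    and no_roots: "\<forall>k\<in>{1..N}. \<forall>lam. \<bar>lam + r k\<bar> \<le> \<mu> \<longrightarrow> PN N D b r lam \<noteq> 0"
    and \<mu>: "0 \<le> \<mu>" and xy: "x < y" and roots: "PN N D b r x = 0" "PN N D b r y = 0"
  shows "2 * \<mu> \<le> y - x"
proof (cases "\<exists>k\<in>{1..N}. x < - r k \<and> - r k < y")
  case True
  then obtain k where "k \<in> {1..N}" "x < - r k" "- r k < y" by blast
  moreover from this have "\<mu> < \<bar>x + r k\<bar>" "\<mu> < \<bar>y + r k\<bar>"
    using no_roots roots by (meson not_le)+
  ultimately show ?thesis by linarith
next
  case False
  have nz: "\<forall>k\<in>{1..N}. x + r k \<noteq> 0" "\<forall>k\<in>{1..N}. y + r k \<noteq> 0"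
    using no_roots roots \<mu> by force+
  have "b i / (y + r i) < b i / (x + r i)" if i: "i \<in> {1..N}" for i
  proof (rule divide_strict_left_mono)
    have "x + r i \<noteq> 0" "y + r i \<noteq> 0" "\<not> (x < - r i \<and> - r i < y)"
      using nz False i by auto
    then have "(0 < x + r i \<and> 0 < y + r i) \<or> (x + r i < 0 \<and> y + r i < 0)"
      using xy by linarith
    then show "0 < (y + r i) * (x + r i)" by (auto simp: zero_less_mult_iff)
  qed (use b i xy in auto)
  then have "(\<Sum>i\<in>{1..N}. b i / (y + r i)) < (\<Sum>i\<in>{1..N}. b i / (x + r i))"
    using N by (intro sum_strict_mono) auto
  moreover have "(\<Sum>i\<in>{1..N}. b i / (z + r i)) = D"
    if "\<forall>k\<in>{1..N}. z + r k \<noteq> 0" "PN N D b r z = 0" for z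
    using that PN_eq_prod_mult[OF that(1), of D b] by simp
  ultimately show ?thesis using nz roots by force
qed

lemma PN_ordered_roots_dist_ge:
  fixes a :: "nat \<Rightarrow> real"
  assumes b: "\<forall>i\<in>{1..N}. b i > 0"
    and no_roots: "\<forall>k\<in>{1..N}. \<forall>lam. \<bar>lam + r k\<bar> \<le> \<mu> \<longrightarrow> PN N D b r lam \<noteq> 0"
    and \<mu>: "0 \<le> \<mu>" and roots: "\<forall>i\<in>{1..N}. PN N D b r (a i) = 0"
    and dec: "\<forall>i\<in>{1..<N}. a (i+1) < a i" and ij: "1 \<le> i" "i < j" "j \<le> N"
  shows "2 * \<mu> \<le> \<bar>a i - a j\<bar>"
proof -
  have "- a i < - a j"
  proof (rule lift_Suc_mono_less_ivl[where N = "{1..<N}"])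
    show "- a k < - a (Suc k)" if "k \<in> {1..<N}" for k
      using dec that by simp
  qed (use ij in auto)
  moreover have "PN N D b r (a i) = 0" "PN N D b r (a j) = 0" using roots ij by auto
  ultimately have "2 * \<mu> \<le> a i - a j"
    using PN_roots_dist_ge[OF b _ no_roots \<mu>] ij by simp
  then show ?thesis by linarith
qed

theorem lemma5p2:
  fixes N :: nat and D :: real and b r a :: "nat \<Rightarrow> real"
  assumes "N \<ge> 2" and "D > 0"
    and "\<forall>i\<in>{1..N}. b i > 0"
    and "r 1 > 0" and "\<forall>i\<in>{1..<N}. r i < r (i+1)"
    and "\<forall>i\<in>{1..N}. PN N D b r (a i) = 0"
    and "\<forall>i\<in>{1..<N}. a (i+1) < a i"
  shows "let bmin = Min (b ` {1..N}); bmax = Max (b ` {1..N});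
             rgap = Min ((\<lambda>i. r (i+1) - r i) ` {1..N-1});
             \<mu> = min (bmin * rgap ^ (N-1) /
                     (4 * D * (2 * r N) ^ (N-1) + 4 * real N * bmax * (2 * r N) ^ (N-2) + 1))
                   (min (rgap / 4) (r 1 / 4))
         in (\<forall>lam \<in> (\<Union>j\<in>{1..N}. {- r j - \<mu> .. - r j + \<mu>}).
                \<bar>PN N D b r lam\<bar> \<ge> bmin * rgap ^ (N-1) / 2 \<and> bmin * rgap ^ (N-1) / 2 > 0)
            \<and> (\<forall>i j. 1 \<le> i \<and> i < j \<and> j \<le> N \<longrightarrow> \<bar>a i - a j\<bar> \<ge> 2 * \<mu>)"
proof -
  define bmin where "bmin = Min (b ` {1..N})"
  define bmax where "bmax = Max (b ` {1..N})"
  define rgap where "rgap = Min ((\<lambda>i. r (i+1) - r i) ` {1..N-1})"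
  define den where "den = 4 * D * (2 * r N) ^ (N-1) + 4 * real N * bmax * (2 * r N) ^ (N-2) + 1"
  define \<mu> where "\<mu> = min (bmin * rgap ^ (N-1) / den) (min (rgap / 4) (r 1 / 4))"
  have b: "\<forall>i\<in>{1..N}. bmin \<le> b i \<and> b i \<le> bmax" "0 < bmin"
    unfolding bmin_def bmax_def using assms(1,3) by auto
  have "{1..N-1} = {1..<N}" using assms(1) by auto
  then have gap: "\<forall>k\<in>{1..<N}. rgap \<le> r (k+1) - r k" "0 < rgap"
    unfolding rgap_def using assms(1,5) by auto
  have "0 < r N" using assms(1,4) le_of_consecutive_less[OF assms(5), of 1 N] by simp
  moreover have "0 < bmax" using b assms(1) by force
  ultimately have "0 < den"
    unfolding den_def using assms(2) by (intro add_nonneg_pos add_nonneg_nonneg) auto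
  moreover have \<mu>: "0 \<le> \<mu>" "\<mu> \<le> bmin * rgap ^ (N-1) / den" "\<mu> \<le> r 1 / 4"
    unfolding \<mu>_def using b(2) gap(2) assms(4) \<open>0 < den\<close> by (simp_all add: min_def)
  ultimately have "\<mu> * den \<le> bmin * rgap ^ (N-1)" by (simp add: pos_le_divide_eq)
  have bound: "bmin * rgap ^ (N-1) / 2 \<le> \<bar>PN N D b r lam\<bar>"
    if "j \<in> {1..N}" "\<bar>lam + r j\<bar> \<le> \<mu>" for j lam
    using PN_abs_ge_half_near_pole[OF assms(1) _ b assms(4,5) gap _ \<mu>(3) that]
      assms(2) \<open>\<mu> * den \<le> bmin * rgap ^ (N-1)\<close>
    unfolding den_def by simp
  have "0 < bmin * rgap ^ (N-1) / 2" using b gap by simp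
  then have "\<forall>k\<in>{1..N}. \<forall>lam. \<bar>lam + r k\<bar> \<le> \<mu> \<longrightarrow> PN N D b r lam \<noteq> 0"
    using bound by fastforce
  note separated = PN_ordered_roots_dist_ge[OF assms(3) this \<mu>(1) assms(6,7)]
  show ?thesis
    unfolding Let_def bmin_def[symmetric] bmax_def[symmetric] rgap_def[symmetric]
      den_def[symmetric] \<mu>_def[symmetric]
    using bound separated \<open>0 < bmin * rgap ^ (N-1) / 2\<close> by fastforce
qed

end
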